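(* Let $X=\mathbb{P}^{n_1}\times\dots\times\mathbb{P}^{n_\ell}$ over an algebraically closed field $k$ of characteristic zero with $\ell\ge3$ (and all $n_i\geq 1$). Then the ample line bundle $\mathcal{O}_X(1,1,\dots,1)$ is not determinantally presented.
   Context: $\mathcal{O}_X(\mathbf{m})$ denotes $\mathcal{O}_{\mathbb{P}^{n_1}}(m_1)\boxtimes\cdots\boxtimes\mathcal{O}_{\mathbb{P}^{n_\ell}}(m_\ell)$. A matrix of linear forms $\Omega$ is $1$-generic if $P\Omega Q$ has no zero entry for all invertible $P,Q$ over $k$. A line bundle $L$ is determinantally presented if its complete linear series embeds $X$ in $\mathbb{P}(H^0(X,L))$ and the homogeneous ideal of $X$ there is generated by the $2\times2$ minors of a $1$-generic matrix of linear forms. *)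

theory Defs
  imports "HOL-Library.Poly_Mapping" "HOL-Computational_Algebra.Polynomial"
begin

text \<open>Multivariate polynomials over a field 'k in variables indexed by nat lists
  (a variable x_j, j = [j_1,...,j_l], is a coordinate of P(V_1 (x) ... (x) V_l)).\<close>
type_synonym 'k mpoly = "(nat list \<Rightarrow>\<^sub>0 nat) \<Rightarrow>\<^sub>0 'k"

definition mpoly_eval :: "(nat list \<Rightarrow> 'k::comm_ring_1) \<Rightarrow> 'k mpoly \<Rightarrow> 'k" where
  "mpoly_eval a p =
     (\<Sum>m\<in>Poly_Mapping.keys p. Poly_Mapping.lookup p m * (\<Prod>v\<in>Poly_Mapping.keys m. a v ^ Poly_Mapping.lookup m v))"

definition mpoly_const :: "'k::zero \<Rightarrow> 'k mpoly" where
  "mpoly_const c = Poly_Mapping.single 0 c"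

definition vars_in :: "nat list set \<Rightarrow> 'k::zero mpoly \<Rightarrow> bool" where
  "vars_in J p \<longleftrightarrow> (\<forall>m\<in>Poly_Mapping.keys p. Poly_Mapping.keys m \<subseteq> J)"

definition is_linear_form :: "nat list set \<Rightarrow> 'k::zero mpoly \<Rightarrow> bool" where
  "is_linear_form J p \<longleftrightarrow> (\<forall>m\<in>Poly_Mapping.keys p. \<exists>v\<in>J. m = Poly_Mapping.single v 1)"

text \<open>index set of the homogeneous coordinates of P(H^0(X, O_X(1,...,1))),
  X = P^{n_0} x ... x P^{n_{l-1}}: tuples (j_0,...,j_{l-1}) with 0 <= j_i <= n_i\<close>
definition segre_index :: "nat \<Rightarrow> (nat \<Rightarrow> nat) \<Rightarrow> nat list set" where
  "segre_index l n = {j. length j = l \<and> (\<forall>i<l. j ! i \<le> n i)}"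

text \<open>point of the affine cone over the image of X under the complete linear series
  of O_X(1,...,1) (Segre map): x_j = prod_i y_i(j_i)\<close>
definition segre_point :: "nat \<Rightarrow> (nat \<Rightarrow> nat \<Rightarrow> 'k::comm_ring_1) \<Rightarrow> nat list \<Rightarrow> 'k" where
  "segre_point l y = (\<lambda>j. \<Prod>i<l. y i (j ! i))"

text \<open>homogeneous ideal of X in P(H^0(X,O_X(1,...,1)))\<close>
definition segre_ideal :: "nat \<Rightarrow> (nat \<Rightarrow> nat) \<Rightarrow> 'k::comm_ring_1 mpoly set" where
  "segre_ideal l n = {p. vars_in (segre_index l n) p \<and>
                         (\<forall>y. mpoly_eval (segre_point l y) p = 0)}"

definition gen_ideal :: "'a::comm_ring_1 set \<Rightarrow> 'a set \<Rightarrow> 'a set" where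
  "gen_ideal R G = {p. \<exists>F c. finite F \<and> F \<subseteq> G \<and> (\<forall>g\<in>F. c g \<in> R) \<and> p = (\<Sum>g\<in>F. c g * g)}"

definition invertible_mat :: "nat \<Rightarrow> (nat \<Rightarrow> nat \<Rightarrow> 'k::comm_ring_1) \<Rightarrow> bool" where
  "invertible_mat r P \<longleftrightarrow> (\<exists>P'. \<forall>a<r. \<forall>b<r.
      (\<Sum>c<r. P a c * P' c b) = (if a = b then 1 else 0) \<and>
      (\<Sum>c<r. P' a c * P c b) = (if a = b then 1 else 0))"

definition one_generic :: "nat \<Rightarrow> nat \<Rightarrow> (nat \<Rightarrow> nat \<Rightarrow> 'k::comm_ring_1 mpoly) \<Rightarrow> bool" where
  "one_generic r s \<Omega> \<longleftrightarrow> (\<forall>P Q. invertible_mat r P \<and> invertible_mat s Q \<longrightarrow>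
      (\<forall>a<r. \<forall>b<s. (\<Sum>c<r. \<Sum>d<s. mpoly_const (P a c) * \<Omega> c d * mpoly_const (Q d b)) \<noteq> 0))"

definition minors2 :: "nat \<Rightarrow> nat \<Rightarrow> (nat \<Rightarrow> nat \<Rightarrow> 'a::comm_ring_1) \<Rightarrow> 'a set" where
  "minors2 r s \<Omega> = {\<Omega> a c * \<Omega> b d - \<Omega> a d * \<Omega> b c | a b c d. a < b \<and> b < r \<and> c < d \<and> d < s}"

definition determinantal_presentation ::
    "nat \<Rightarrow> (nat \<Rightarrow> nat) \<Rightarrow> nat \<Rightarrow> nat \<Rightarrow> (nat \<Rightarrow> nat \<Rightarrow> 'k::comm_ring_1 mpoly) \<Rightarrow> bool" where
  "determinantal_presentation l n r s \<Omega> \<longleftrightarrow>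
     (\<forall>a<r. \<forall>b<s. is_linear_form (segre_index l n) (\<Omega> a b)) \<and>
     one_generic r s \<Omega> \<and>
     gen_ideal {p. vars_in (segre_index l n) p} (minors2 r s \<Omega>) = segre_ideal l n"

end

theory Submission
  imports Defs
begin

(* Evaluating a presenting matrix \<Omega> at a point z of the affine cone over X gives a matrix of rank
   at most one exactly when the 2x2 minors, hence the whole ideal of X, vanish at z.
   Write \<Omega>(e_j) = u_j \<alpha>_j^T for the coordinate points e_j of the cone. By linearity
   \<Omega>(e_j + e_j') = u_j \<alpha>_j^T + u_j' \<alpha>_j'^T, which has rank at most one iff u_j, u_j' or
   \<alpha>_j, \<alpha>_j' are parallel. The point e_j + e_j' lies on the cone when j and j' differ in one
   factor, and off it when they differ in two, where a binomial x_j x_j' - x_k x_k' of the ideal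
   does not vanish. Of the three multi-indices adjacent to 0 in the first three factors, each
   shares u or \<alpha> with 0; by pigeonhole two of them share the same one, yet they differ in
   two factors. This is where l \<ge> 3 enters. *)

definition monomial_eval :: "(nat list \<Rightarrow> 'k::comm_ring_1) \<Rightarrow> (nat list \<Rightarrow>\<^sub>0 nat) \<Rightarrow> 'k" where
  "monomial_eval a m = (\<Prod>v\<in>Poly_Mapping.keys m. a v ^ Poly_Mapping.lookup m v)"

lemma monomial_eval_superset:
  assumes "finite K" "Poly_Mapping.keys m \<subseteq> K"
  shows "monomial_eval a m = (\<Prod>v\<in>K. a v ^ Poly_Mapping.lookup m v)"
  unfolding monomial_eval_def
  by (rule prod.mono_neutral_left[OF assms]) (auto simp: in_keys_iff)

lemma monomial_eval_add: "monomial_eval a (m1 + m2) = monomial_eval a m1 * monomial_eval a m2"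
proof -
  let ?K = "Poly_Mapping.keys m1 \<union> Poly_Mapping.keys m2"
  have K: "finite ?K" by simp
  have "monomial_eval a (m1 + m2) = (\<Prod>v\<in>?K. a v ^ Poly_Mapping.lookup (m1 + m2) v)"
    by (rule monomial_eval_superset[OF K]) (rule keys_add)
  also have "\<dots> = (\<Prod>v\<in>?K. a v ^ Poly_Mapping.lookup m1 v * a v ^ Poly_Mapping.lookup m2 v)"
    by (simp add: lookup_add power_add)
  also have "\<dots> = monomial_eval a m1 * monomial_eval a m2"
    by (simp add: prod.distrib monomial_eval_superset[OF K])
  finally show ?thesis .
qed

lemma monomial_eval_single [simp]: "monomial_eval a (Poly_Mapping.single v k) = a v ^ k"
  by (cases "k = 0") (simp_all add: monomial_eval_def)

lemma mpoly_eval_eq_sum_monomials: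
  "mpoly_eval a p = (\<Sum>m\<in>Poly_Mapping.keys p. Poly_Mapping.lookup p m * monomial_eval a m)"
  by (simp add: mpoly_eval_def monomial_eval_def)

lemma mpoly_eval_add: "mpoly_eval a (p + q) = mpoly_eval a p + mpoly_eval a q"
  unfolding mpoly_eval_eq_sum_monomials
  by (rule setsum_keys_plus_distrib) (auto simp: distrib_right)

lemma mpoly_eval_single: "mpoly_eval a (Poly_Mapping.single m c) = c * monomial_eval a m"
  by (simp add: mpoly_eval_eq_sum_monomials)

lemma mpoly_eval_zero [simp]: "mpoly_eval a 0 = 0"
  by (simp add: mpoly_eval_def)

lemma mpoly_eval_sum: "mpoly_eval a (sum f A) = (\<Sum>x\<in>A. mpoly_eval a (f x))"
  by (induction A rule: infinite_finite_induct) (auto simp: mpoly_eval_add)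

lemma mpoly_eval_diff: "mpoly_eval a (p - q) = mpoly_eval a p - mpoly_eval a q"
proof -
  have "mpoly_eval a (- q) = - mpoly_eval a q"
    by (simp add: mpoly_eval_eq_sum_monomials sum_negf)
  then show ?thesis
    unfolding diff_conv_add_uminus[of p q] mpoly_eval_add by simp
qed

lemma mpoly_eval_mult: "mpoly_eval a (p * q) = mpoly_eval a p * mpoly_eval a q"
proof -
  have expand: "r = (\<Sum>m\<in>Poly_Mapping.keys r. Poly_Mapping.single m (Poly_Mapping.lookup r m))"
    for r :: "'a mpoly"
    by (rule poly_mapping_eqI)
      (auto simp: lookup_sum lookup_single when_def in_keys_iff sum.delta[OF finite_keys])
  have "p * q = (\<Sum>m\<in>Poly_Mapping.keys p. \<Sum>m'\<in>Poly_Mapping.keys q.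
        Poly_Mapping.single (m + m') (Poly_Mapping.lookup p m * Poly_Mapping.lookup q m'))"
  proof -
    have "p * q = (\<Sum>m\<in>Poly_Mapping.keys p. Poly_Mapping.single m (Poly_Mapping.lookup p m)) *
        (\<Sum>m'\<in>Poly_Mapping.keys q. Poly_Mapping.single m' (Poly_Mapping.lookup q m'))"
      using expand[of p] expand[of q] by simp
    then show ?thesis
      by (simp add: sum_distrib_left sum_distrib_right mult_single) (rule sum.swap)
  qed
  then have "mpoly_eval a (p * q) = (\<Sum>m\<in>Poly_Mapping.keys p. \<Sum>m'\<in>Poly_Mapping.keys q.
        (Poly_Mapping.lookup p m * monomial_eval a m) * (Poly_Mapping.lookup q m' * monomial_eval a m'))"
    by (simp add: mpoly_eval_sum mpoly_eval_single monomial_eval_add mult_ac)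
  also have "\<dots> = mpoly_eval a p * mpoly_eval a q"
    by (simp add: mpoly_eval_eq_sum_monomials sum_product)
  finally show ?thesis .
qed

lemma mpoly_eval_linear_form_add:
  assumes "is_linear_form J p"
  shows "mpoly_eval (\<lambda>j. a j + b j) p = mpoly_eval a p + mpoly_eval b p"
proof -
  have "monomial_eval (\<lambda>j. a j + b j) m = monomial_eval a m + monomial_eval b m"
    if "m \<in> Poly_Mapping.keys p" for m
    using assms that unfolding is_linear_form_def by auto
  then show ?thesis
    by (simp add: mpoly_eval_eq_sum_monomials distrib_left sum.distrib)
qed

lemma mpoly_eval_gen_ideal:
  assumes "p \<in> gen_ideal R G" "\<forall>g\<in>G. mpoly_eval a g = 0"
  shows "mpoly_eval a p = 0"
proof -
  obtain F c where "F \<subseteq> G" "p = (\<Sum>g\<in>F. c g * g)"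
    using assms(1) unfolding gen_ideal_def by blast
  then show ?thesis
    using assms(2) by (auto simp: mpoly_eval_sum mpoly_eval_mult intro!: sum.neutral)
qed

definition mpoly_var :: "nat list \<Rightarrow> 'k::comm_ring_1 mpoly" where
  "mpoly_var j = Poly_Mapping.single (Poly_Mapping.single j 1) 1"

lemma mpoly_eval_var [simp]: "mpoly_eval a (mpoly_var j) = a j"
  by (simp add: mpoly_var_def mpoly_eval_single)

lemma vars_in_diff:
  assumes "vars_in J p" "vars_in J q"
  shows "vars_in J (p - q :: 'k::comm_ring_1 mpoly)"
proof -
  have "Poly_Mapping.keys (p - q) \<subseteq> Poly_Mapping.keys p \<union> Poly_Mapping.keys q"
    using keys_add[of p "- q"] unfolding diff_conv_add_uminus[of p q] keys_minus .
  then show ?thesis using assms unfolding vars_in_def by blast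
qed

lemma vars_in_mult:
  assumes "vars_in J p" "vars_in J q"
  shows "vars_in J (p * q :: 'k::comm_ring_1 mpoly)"
  unfolding vars_in_def
proof
  fix m assume "m \<in> Poly_Mapping.keys (p * q)"
  then obtain a b where "m = a + b" "a \<in> Poly_Mapping.keys p" "b \<in> Poly_Mapping.keys q"
    using keys_mult[of p q] by blast
  then show "Poly_Mapping.keys m \<subseteq> J"
    using assms keys_add[of a b] unfolding vars_in_def by blast
qed

lemma vars_in_var: "j \<in> J \<Longrightarrow> vars_in J (mpoly_var j :: 'k::comm_ring_1 mpoly)"
  by (simp add: vars_in_def mpoly_var_def)

lemma segre_point_remove:
  assumes "i < l"
  shows "segre_point l y j = y i (j ! i) * (\<Prod>x\<in>{..<l} - {i}. y x (j ! x))"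
  unfolding segre_point_def using assms by (subst prod.remove[of _ i]) auto

lemma segre_point_add_factor:
  assumes "i < l"
  shows "segre_point l (y(i := f)) j + segre_point l (y(i := g)) j =
         segre_point l (y(i := (\<lambda>t. f t + g t))) j"
proof -
  have "segre_point l (y(i := h)) j = h (j ! i) * (\<Prod>x\<in>{..<l} - {i}. y x (j ! x))" for h
    unfolding segre_point_remove[OF assms] by (simp add: prod.cong[OF refl, of _ "\<lambda>x. (y(i := h)) x (j ! x)"])
  then show ?thesis by (simp add: distrib_right)
qed

lemma segre_binomial_in_segre_ideal:
  assumes "j1 \<in> segre_index l n" "j2 \<in> segre_index l n" "k1 \<in> segre_index l n" "k2 \<in> segre_index l n"
    and swap: "\<forall>i<l. (k1 ! i = j1 ! i \<and> k2 ! i = j2 ! i) \<or> (k1 ! i = j2 ! i \<and> k2 ! i = j1 ! i)"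
  shows "mpoly_var j1 * mpoly_var j2 - mpoly_var k1 * mpoly_var k2
           \<in> (segre_ideal l n :: 'k::comm_ring_1 mpoly set)"
  unfolding segre_ideal_def
proof (intro CollectI conjI allI)
  show "vars_in (segre_index l n) (mpoly_var j1 * mpoly_var j2 - mpoly_var k1 * mpoly_var k2 :: 'k mpoly)"
    using assms by (intro vars_in_diff vars_in_mult vars_in_var)
next
  fix y :: "nat \<Rightarrow> nat \<Rightarrow> 'k"
  have factors: "y i (k1 ! i) * y i (k2 ! i) = y i (j1 ! i) * y i (j2 ! i)" if "i < l" for i
    using swap that by (auto simp: mult.commute)
  have "segre_point l y k1 * segre_point l y k2 = segre_point l y j1 * segre_point l y j2"
    unfolding segre_point_def prod.distrib[symmetric] by (rule prod.cong) (simp_all add: factors)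
  then show "mpoly_eval (segre_point l y) (mpoly_var j1 * mpoly_var j2 - mpoly_var k1 * mpoly_var k2) = 0"
    by (simp add: mpoly_eval_diff mpoly_eval_mult)
qed

definition unit_factors :: "nat list \<Rightarrow> nat \<Rightarrow> nat \<Rightarrow> 'k::zero_neq_one" where
  "unit_factors j i t = (if t = j ! i then 1 else 0)"

definition coordinate_point :: "nat \<Rightarrow> nat list \<Rightarrow> nat list \<Rightarrow> 'k::comm_ring_1" where
  "coordinate_point l j = segre_point l (unit_factors j)"

lemma coordinate_point_eq:
  assumes "length j = l" "length k = l"
  shows "coordinate_point l j k = (if k = j then 1 else 0)"
proof (cases "k = j")
  case False
  then obtain i where "i < l" "k ! i \<noteq> j ! i"
    using assms by (auto simp: list_eq_iff_nth_eq)
  then show ?thesis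
    using False by (auto simp: coordinate_point_def segre_point_def unit_factors_def intro!: prod_zero)
qed (simp add: coordinate_point_def segre_point_def unit_factors_def)

lemma coordinate_point_add:
  assumes "i < l" "\<forall>x. x \<noteq> i \<longrightarrow> j ! x = j' ! x"
  shows "(\<lambda>k. coordinate_point l j k + coordinate_point l j' k) =
         segre_point l ((unit_factors j)(i := (\<lambda>t. unit_factors j i t + unit_factors j' i t)))"
proof
  fix k
  have j': "(unit_factors j)(i := unit_factors j' i) = unit_factors j'"
    using assms(2) by (auto simp: unit_factors_def fun_eq_iff)
  have "coordinate_point l j k + coordinate_point l j' k =
        segre_point l ((unit_factors j)(i := unit_factors j i)) k +
        segre_point l ((unit_factors j)(i := unit_factors j' i)) k"
    by (simp only: coordinate_point_def fun_upd_triv j')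
  also have "\<dots> = segre_point l ((unit_factors j)(i := (\<lambda>t. unit_factors j i t + unit_factors j' i t))) k"
    by (rule segre_point_add_factor[OF assms(1)])
  finally show "coordinate_point l j k + coordinate_point l j' k = \<dots>" .
qed

definition rank_le1 :: "nat \<Rightarrow> nat \<Rightarrow> (nat \<Rightarrow> nat \<Rightarrow> 'k::comm_ring_1) \<Rightarrow> bool" where
  "rank_le1 r s M \<longleftrightarrow>
     (\<forall>a b c d. a < r \<longrightarrow> b < r \<longrightarrow> c < s \<longrightarrow> d < s \<longrightarrow> M a c * M b d = M a d * M b c)"

lemma rank_le1_iff_ordered:
  "rank_le1 r s M \<longleftrightarrow>
     (\<forall>a b c d. a < b \<longrightarrow> b < r \<longrightarrow> c < d \<longrightarrow> d < s \<longrightarrow> M a c * M b d = M a d * M b c)"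
  (is "_ \<longleftrightarrow> ?ordered")
proof
  assume ordered: ?ordered
  have rows_ordered: "M a c * M b d = M a d * M b c" if "a < b" "b < r" "c < s" "d < s" for a b c d
  proof -
    consider "c < d" | "c = d" | "d < c" by linarith
    then show ?thesis
    proof cases
      case 1
      then show ?thesis using ordered that by blast
    next
      case 3
      then have "M a d * M b c = M a c * M b d" using ordered that by blast
      then show ?thesis by simp
    qed simp
  qed
  show "rank_le1 r s M"
    unfolding rank_le1_def
  proof (intro allI impI)
    fix a b c d assume bounds: "a < r" "b < r" "c < s" "d < s"
    consider "a < b" | "a = b" | "b < a" by linarith
    then show "M a c * M b d = M a d * M b c"
    proof cases
      case 1
      then show ?thesis using rows_ordered bounds by blast
    next
      case 3
      then have "M b c * M a d = M b d * M a c" using rows_ordered bounds by blast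
      then show ?thesis by (simp add: mult.commute)
    qed (simp add: mult.commute)
  qed
next
  assume "rank_le1 r s M"
  then show ?ordered unfolding rank_le1_def by simp
qed

lemma rank_le1_cong:
  assumes "rank_le1 r s M" "\<And>a b. a < r \<Longrightarrow> b < s \<Longrightarrow> M a b = N a b"
  shows "rank_le1 r s N"
  using assms unfolding rank_le1_def by metis

lemma rank_le1_outer:
  fixes M :: "nat \<Rightarrow> nat \<Rightarrow> 'k::field"
  assumes "rank_le1 r s M"
  obtains u \<alpha> where "\<forall>a<r. \<forall>b<s. M a b = u a * \<alpha> b"
proof (cases "\<exists>p<r. \<exists>q<s. M p q \<noteq> 0")
  case True
  then obtain p q where pq: "p < r" "q < s" "M p q \<noteq> 0" by blast
  have "M a b = M a q * (M p b / M p q)" if "a < r" "b < s" for a b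
    using assms pq that unfolding rank_le1_def by (simp add: field_simps)
  then show ?thesis by (intro that[of "\<lambda>a. M a q" "\<lambda>b. M p b / M p q"]) blast
next
  case False
  then show ?thesis by (intro that[of "\<lambda>_. 0"]) auto
qed

definition parallel :: "nat \<Rightarrow> (nat \<Rightarrow> 'k::comm_ring_1) \<Rightarrow> (nat \<Rightarrow> 'k) \<Rightarrow> bool" where
  "parallel n u v \<longleftrightarrow> (\<forall>i<n. \<forall>j<n. u i * v j = u j * v i)"

lemma parallel_sym: "parallel n u v \<Longrightarrow> parallel n v u"
  unfolding parallel_def by (simp add: mult.commute)

lemma not_parallel_nonzero: "\<not> parallel n u v \<Longrightarrow> (\<exists>p<n. u p \<noteq> 0) \<and> (\<exists>p<n. v p \<noteq> 0)"
  unfolding parallel_def by (metis mult_zero_left mult_zero_right)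

lemma parallel_trans:
  fixes u v w :: "nat \<Rightarrow> 'k::field"
  assumes uv: "parallel n u v" and vw: "parallel n v w" and nonzero: "\<exists>p<n. v p \<noteq> 0"
  shows "parallel n u w"
  unfolding parallel_def
proof (intro allI impI)
  fix i j assume ij: "i < n" "j < n"
  obtain p where p: "p < n" "v p \<noteq> 0" using nonzero by blast
  have u: "u i * v p = u p * v i" "u j * v p = u p * v j" using uv p ij unfolding parallel_def by blast+
  have w: "v p * w i = v i * w p" "v p * w j = v j * w p" using vw p ij unfolding parallel_def by blast+
  have "v p * v p * (u i * w j) = (u i * v p) * (v p * w j)" by (simp add: mult_ac)
  also have "\<dots> = (u p * v j) * (v i * w p)" by (simp only: u w mult_ac)
  also have "\<dots> = (u j * v p) * (v p * w i)" by (simp only: u w)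
  also have "\<dots> = v p * v p * (u j * w i)" by (simp add: mult_ac)
  finally show "u i * w j = u j * w i" using p(2) by simp
qed

lemma rank_le1_add_outer_iff:
  fixes M N :: "nat \<Rightarrow> nat \<Rightarrow> 'k::field"
  assumes M: "\<forall>a<r. \<forall>b<s. M a b = u a * \<alpha> b" and N: "\<forall>a<r. \<forall>b<s. N a b = v a * \<beta> b"
  shows "rank_le1 r s (\<lambda>a b. M a b + N a b) \<longleftrightarrow> parallel r u v \<or> parallel s \<alpha> \<beta>"
proof -
  have minor: "(M a c + N a c) * (M b d + N b d) = (M a d + N a d) * (M b c + N b c) \<longleftrightarrow>
      u a * v b = u b * v a \<or> \<alpha> c * \<beta> d = \<alpha> d * \<beta> c"
    if "a < r" "b < r" "c < s" "d < s" for a b c d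
  proof -
    have "(M a c + N a c) * (M b d + N b d) - (M a d + N a d) * (M b c + N b c) =
        (u a * \<alpha> c + v a * \<beta> c) * (u b * \<alpha> d + v b * \<beta> d) -
        (u a * \<alpha> d + v a * \<beta> d) * (u b * \<alpha> c + v b * \<beta> c)"
      using M N that by simp
    also have "\<dots> = (u a * v b - u b * v a) * (\<alpha> c * \<beta> d - \<alpha> d * \<beta> c)"
      by (simp add: algebra_simps)
    finally show ?thesis
      by (metis eq_iff_diff_eq_0 mult_eq_0_iff)
  qed
  show ?thesis
  proof
    assume "rank_le1 r s (\<lambda>a b. M a b + N a b)"
    then show "parallel r u v \<or> parallel s \<alpha> \<beta>"
      unfolding rank_le1_def parallel_def using minor by blast
  next
    assume "parallel r u v \<or> parallel s \<alpha> \<beta>"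
    then show "rank_le1 r s (\<lambda>a b. M a b + N a b)"
      unfolding rank_le1_def parallel_def using minor by blast
  qed
qed

lemma parallel_through:
  fixes u v w :: "nat \<Rightarrow> 'k::field"
  assumes "parallel n u v" "parallel n u w" "\<exists>p<n. u p \<noteq> 0"
  shows "parallel n v w"
  using assms parallel_sym parallel_trans by blast

lemma parallel_pigeonhole:
  fixes u u1 u2 u3 v v1 v2 v3 :: "nat \<Rightarrow> 'k::field"
  assumes nonzero: "\<exists>p<r. u p \<noteq> 0" "\<exists>p<s. v p \<noteq> 0"
    and "parallel r u u1 \<or> parallel s v v1" "parallel r u u2 \<or> parallel s v v2"
      "parallel r u u3 \<or> parallel s v v3"
    and "\<not> (parallel r u1 u2 \<or> parallel s v1 v2)" "\<not> (parallel r u1 u3 \<or> parallel s v1 v3)"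
      "\<not> (parallel r u2 u3 \<or> parallel s v2 v3)"
  shows False
  using assms(3-) parallel_through[OF _ _ nonzero(1)] parallel_through[OF _ _ nonzero(2)] by metis

text \<open>F only serves to show that A is not zero.\<close>
lemma rank_le1_sums_pigeonhole:
  fixes A B1 B2 B3 F :: "nat \<Rightarrow> nat \<Rightarrow> 'k::field"
  assumes "rank_le1 r s A" "rank_le1 r s B1" "rank_le1 r s B2" "rank_le1 r s B3" "rank_le1 r s F"
    and "rank_le1 r s (\<lambda>a b. A a b + B1 a b)" "rank_le1 r s (\<lambda>a b. A a b + B2 a b)"
      "rank_le1 r s (\<lambda>a b. A a b + B3 a b)"
    and "\<not> rank_le1 r s (\<lambda>a b. B1 a b + B2 a b)" "\<not> rank_le1 r s (\<lambda>a b. B1 a b + B3 a b)"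
      "\<not> rank_le1 r s (\<lambda>a b. B2 a b + B3 a b)"
    and "\<not> rank_le1 r s (\<lambda>a b. A a b + F a b)"
  shows False
proof -
  obtain u v where A: "\<forall>a<r. \<forall>b<s. A a b = u a * v b" using rank_le1_outer assms(1) .
  obtain u1 v1 where B1: "\<forall>a<r. \<forall>b<s. B1 a b = u1 a * v1 b" using rank_le1_outer assms(2) .
  obtain u2 v2 where B2: "\<forall>a<r. \<forall>b<s. B2 a b = u2 a * v2 b" using rank_le1_outer assms(3) .
  obtain u3 v3 where B3: "\<forall>a<r. \<forall>b<s. B3 a b = u3 a * v3 b" using rank_le1_outer assms(4) .
  obtain uF vF where F: "\<forall>a<r. \<forall>b<s. F a b = uF a * vF b" using rank_le1_outer assms(5) .
  have "(\<exists>p<r. u p \<noteq> 0) \<and> (\<exists>p<s. v p \<noteq> 0)"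
    using assms(12) not_parallel_nonzero unfolding rank_le1_add_outer_iff[OF A F] by blast
  then show False
    using assms(6-11) parallel_pigeonhole[of r u s v u1 v1 u2 v2 u3 v3]
    unfolding rank_le1_add_outer_iff[OF A B1] rank_le1_add_outer_iff[OF A B2]
      rank_le1_add_outer_iff[OF A B3] rank_le1_add_outer_iff[OF B1 B2]
      rank_le1_add_outer_iff[OF B1 B3] rank_le1_add_outer_iff[OF B2 B3]
    by blast
qed

definition eval_matrix ::
    "(nat list \<Rightarrow> 'k::comm_ring_1) \<Rightarrow> (nat \<Rightarrow> nat \<Rightarrow> 'k mpoly) \<Rightarrow> nat \<Rightarrow> nat \<Rightarrow> 'k" where
  "eval_matrix z \<Omega> a b = mpoly_eval z (\<Omega> a b)"

lemma rank_le1_eval_matrix_iff: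
  "rank_le1 r s (eval_matrix z \<Omega>) \<longleftrightarrow> (\<forall>g\<in>minors2 r s \<Omega>. mpoly_eval z g = 0)"
proof -
  have "mpoly_eval z (\<Omega> a c * \<Omega> b d - \<Omega> a d * \<Omega> b c) = 0 \<longleftrightarrow>
      eval_matrix z \<Omega> a c * eval_matrix z \<Omega> b d = eval_matrix z \<Omega> a d * eval_matrix z \<Omega> b c" for a b c d
    by (simp add: eval_matrix_def mpoly_eval_diff mpoly_eval_mult)
  then show ?thesis
    unfolding rank_le1_iff_ordered minors2_def by blast
qed

lemma determinantal_presentation_rank_le1_segre_point:
  assumes "determinantal_presentation l n r s \<Omega>"
  shows "rank_le1 r s (eval_matrix (segre_point l y) \<Omega>)"
  unfolding rank_le1_eval_matrix_iff
proof
  fix g assume g: "g \<in> minors2 r s \<Omega>"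
  have "vars_in (segre_index l n) (1 :: 'a mpoly)"
    by (simp add: vars_in_def)
  then have "g \<in> gen_ideal {p. vars_in (segre_index l n) p} (minors2 r s \<Omega>)"
    unfolding gen_ideal_def using g by (intro CollectI exI[of _ "{g}"] exI[of _ "\<lambda>_. 1"]) auto
  then show "mpoly_eval (segre_point l y) g = 0"
    using assms unfolding determinantal_presentation_def segre_ideal_def by blast
qed

lemma determinantal_presentation_vanishing:
  assumes "determinantal_presentation l n r s \<Omega>" "rank_le1 r s (eval_matrix z \<Omega>)"
    and "q \<in> segre_ideal l n"
  shows "mpoly_eval z q = 0"
proof (rule mpoly_eval_gen_ideal)
  show "q \<in> gen_ideal {p. vars_in (segre_index l n) p} (minors2 r s \<Omega>)"
    using assms(1,3) unfolding determinantal_presentation_def by simp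
  show "\<forall>g\<in>minors2 r s \<Omega>. mpoly_eval z g = 0"
    using assms(2) unfolding rank_le1_eval_matrix_iff .
qed

lemma determinantal_presentation_rank_le1_add:
  assumes "determinantal_presentation l n r s \<Omega>"
  shows "rank_le1 r s (\<lambda>a b. eval_matrix z \<Omega> a b + eval_matrix z' \<Omega> a b) \<longleftrightarrow>
         rank_le1 r s (eval_matrix (\<lambda>k. z k + z' k) \<Omega>)"
proof -
  have add: "eval_matrix (\<lambda>k. z k + z' k) \<Omega> a b = eval_matrix z \<Omega> a b + eval_matrix z' \<Omega> a b"
    if "a < r" "b < s" for a b
    using assms that mpoly_eval_linear_form_add
    unfolding determinantal_presentation_def eval_matrix_def by blast
  show ?thesis
    by (intro iffI; erule rank_le1_cong; simp add: add)
qed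

lemma determinantal_presentation_adjacent_points:
  assumes "determinantal_presentation l n r s \<Omega>" "i < l" "\<forall>x. x \<noteq> i \<longrightarrow> j ! x = j' ! x"
  shows "rank_le1 r s
           (\<lambda>a b. eval_matrix (coordinate_point l j) \<Omega> a b + eval_matrix (coordinate_point l j') \<Omega> a b)"
  unfolding determinantal_presentation_rank_le1_add[OF assms(1)] coordinate_point_add[OF assms(2,3)]
  by (rule determinantal_presentation_rank_le1_segre_point[OF assms(1)])

(* The binomial x_j x_j' - x_k x_k' of the ideal, where k and k' arise from j and j' by exchanging
   their i-th entries, takes the value 1 at e_j + e_j'. *)
lemma determinantal_presentation_distant_points:
  fixes \<Omega> :: "nat \<Rightarrow> nat \<Rightarrow> 'k::field mpoly"
  assumes "determinantal_presentation l n r s \<Omega>" "j \<in> segre_index l n" "j' \<in> segre_index l n"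
    and "i < l" "i' < l" "i \<noteq> i'" "j ! i \<noteq> j' ! i" "j ! i' \<noteq> j' ! i'"
  shows "\<not> rank_le1 r s
           (\<lambda>a b. eval_matrix (coordinate_point l j) \<Omega> a b + eval_matrix (coordinate_point l j') \<Omega> a b)"
proof
  assume "rank_le1 r s (\<lambda>a b. eval_matrix (coordinate_point l j) \<Omega> a b +
                                eval_matrix (coordinate_point l j') \<Omega> a b)"
  then have rank: "rank_le1 r s (eval_matrix (\<lambda>m. coordinate_point l j m + coordinate_point l j' m) \<Omega>)"
    unfolding determinantal_presentation_rank_le1_add[OF assms(1)] .
  define k where "k = j[i := j' ! i]"
  define k' where "k' = j'[i := j ! i]"
  have len: "length j = l" "length j' = l" "length k = l" "length k' = l"
    using assms(2,3) by (simp_all add: segre_index_def k_def k'_def)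
  have k: "k \<in> segre_index l n" "k' \<in> segre_index l n"
    using assms(2-4) by (auto simp: segre_index_def k_def k'_def nth_list_update)
  have "k ! i = j' ! i" "k ! i' = j ! i'" "k' ! i = j ! i" "k' ! i' = j' ! i'"
    using assms(4,6) len by (simp_all add: k_def k'_def)
  then have distinct: "j \<noteq> j'" "k \<noteq> j" "k \<noteq> j'" "k' \<noteq> j" "k' \<noteq> j'"
    using assms(7,8) by auto
  have "(k ! x = j ! x \<and> k' ! x = j' ! x) \<or> (k ! x = j' ! x \<and> k' ! x = j ! x)" if "x < l" for x
    using assms(4) len by (cases "x = i") (simp_all add: k_def k'_def)
  then have "mpoly_var j * mpoly_var j' - mpoly_var k * mpoly_var k' \<in> (segre_ideal l n :: 'k mpoly set)"
    using assms(2,3) k by (intro segre_binomial_in_segre_ideal) auto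
  with rank have "mpoly_eval (\<lambda>m. coordinate_point l j m + coordinate_point l j' m :: 'k)
      (mpoly_var j * mpoly_var j' - mpoly_var k * mpoly_var k') = 0"
    by (rule determinantal_presentation_vanishing[OF assms(1)])
  then show False
    using distinct by (simp add: coordinate_point_eq len mpoly_eval_diff mpoly_eval_mult)
qed

theorem proposition4p2:
  fixes l :: nat and n :: "nat \<Rightarrow> nat"
  assumes alg_closed: "\<forall>p :: 'k::field_char_0 poly. degree p > 0 \<longrightarrow> (\<exists>x. poly p x = 0)"
    and "l \<ge> 3"
    and "\<forall>i<l. n i \<ge> 1"
  shows "\<not> (\<exists>r s (\<Omega> :: nat \<Rightarrow> nat \<Rightarrow> 'k mpoly). determinantal_presentation l n r s \<Omega>)"
proof
  assume "\<exists>r s (\<Omega> :: nat \<Rightarrow> nat \<Rightarrow> 'k mpoly). determinantal_presentation l n r s \<Omega>"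
  then obtain r s and \<Omega> :: "nat \<Rightarrow> nat \<Rightarrow> 'k mpoly" where P: "determinantal_presentation l n r s \<Omega>"
    by blast
  define origin where "origin = replicate l (0::nat)"
  define M where "M j = eval_matrix (coordinate_point l j) \<Omega>" for j
  have factors: "0 < l" "1 < l" "2 < l" "(0::nat) \<noteq> 1" "(0::nat) \<noteq> 2" "(1::nat) \<noteq> 2"
    using assms(2) by simp_all
  have binary_index: "j \<in> segre_index l n" if "length j = l" "\<forall>x<l. j ! x \<le> 1" for j
    using that assms(3) by (auto simp: segre_index_def intro: le_trans)
  have "origin[i := 1] ! x \<le> 1" if "x < l" for i x
    using that by (cases "x = i") (simp_all add: origin_def)
  moreover have "origin[0 := 1, 1 := 1] ! x \<le> 1" if "x < l" for x
    using that by (cases "x = 0"; cases "x = 1") (simp_all add: origin_def)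
  ultimately have index: "origin \<in> segre_index l n" "origin[i := 1] \<in> segre_index l n"
      "origin[0 := 1, 1 := 1] \<in> segre_index l n" for i
    by (auto simp: origin_def intro!: binary_index)
  have rank: "rank_le1 r s (M j)" for j
    unfolding M_def coordinate_point_def by (rule determinantal_presentation_rank_le1_segre_point[OF P])
  have adjacent: "rank_le1 r s (\<lambda>a b. M origin a b + M (origin[i := 1]) a b)" if "i < l" for i
    unfolding M_def using that by (rule determinantal_presentation_adjacent_points[OF P]) simp
  have distant: "\<not> rank_le1 r s (\<lambda>a b. M (origin[i := 1]) a b + M (origin[i' := 1]) a b)"
    if "i < l" "i' < l" "i \<noteq> i'" for i i'
    unfolding M_def using that
    by (intro determinantal_presentation_distant_points[OF P index(2) index(2) that]) (simp_all add: origin_def)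
  have "\<not> rank_le1 r s (\<lambda>a b. M origin a b + M (origin[0 := 1, 1 := 1]) a b)"
    unfolding M_def using factors
    by (intro determinantal_presentation_distant_points[OF P index(1) index(3), of 0 1]) (simp_all add: origin_def)
  then show False
    using rank_le1_sums_pigeonhole[OF rank rank rank rank rank adjacent adjacent adjacent
        distant distant distant] factors by blast
qed

end
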